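(* Let $\mathscr C$ and $J$ be as defined below. (i) Let $H$ be a non-trivial rank one subgroup of $\mathbb{R}$. Then $F_H(V):=V\cap H\cap(0,\infty)$, with a morphism $n\in\mathrm{Hom}_{\mathscr C}(V,W)$ acting as multiplication by $n$, defines a flat continuous functor $F_H:\mathscr C\to\mathfrak{Sets}$. (ii) The map $H\mapsto\mathfrak{p}_H$, which associates to a non-trivial rank one subgroup $H\subset\mathbb{R}$ the point of the topos $\mathfrak{Sh}(\mathscr C,J)$ represented by $F_H$, is injective from the set of non-trivial rank one subgroups of $\mathbb{R}$ to the set of isomorphism classes of points of this topos.
   Context: $\mathbb{N}^{\times}$ is the multiplicative monoid of positive integers. $\mathscr C$ is the small category whose objects are the (possibly empty) bounded open subintervals of $[0,\infty)$ (including intervals $[0,a)$), with $\mathrm{Hom}_{\mathscr C}(\Omega,\Omega')=\{n\in\mathbb{N}^{\times}\mid n\Omega\subset\Omega'\}$ for $\Omega\neq\emptyset$, $\mathrm{Hom}_{\mathscr C}(\emptyset,\Omega')$ a singleton, composition being multiplication. $J$ is the Grothendieck topology generated by ordinary open covers of intervals by subintervals. A rank one subgroup of $\mathbb{R}$ is a subgroup isomorphic to a non-zero subgroup of $\mathbb{Q}$. A functor $F:\mathscr C\to\mathfrak{Sets}$ is flat iff it is filtering: (1) $F(C)\neq\emptyset$ for some object $C$; (2) for $a_j\in F(C_j)$, $j=1,2$, there exist an object $C$, $a\in F(C)$ and morphisms $u_j:C\to C_j$ with $F(u_j)a=a_j$; (3) for morphisms $u,v:C\to D$ and $a\in F(C)$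 with $F(u)a=F(v)a$ there exist an object $B$, $b\in F(B)$ and $w:B\to C$ with $u\circ w=v\circ w$ and $F(w)b=a$. A flat functor is continuous iff for every object $U$ and cover $\{U_j\subset U\}$ the maps $F(U_j)\to F(U)$ are jointly surjective. Points of $\mathfrak{Sh}(\mathscr C,J)$ correspond (up to equivalence) to flat continuous functors $\mathscr C\to\mathfrak{Sets}$. *)

theory Defs
  imports Complex_Main
begin

definition add_subgroup :: "'a::ab_group_add set \<Rightarrow> bool" where
  "add_subgroup S \<longleftrightarrow> 0 \<in> S \<and> (\<forall>x\<in>S. \<forall>y\<in>S. x + y \<in> S) \<and> (\<forall>x\<in>S. - x \<in> S)"

definition rank_one_subgroup :: "real set \<Rightarrow> bool" where
  "rank_one_subgroup H \<longleftrightarrow> add_subgroup H \<and>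
     (\<exists>(Q::rat set) (\<phi>::real \<Rightarrow> rat). add_subgroup Q \<and> Q \<noteq> {0} \<and> bij_betw \<phi> H Q \<and>
        (\<forall>x\<in>H. \<forall>y\<in>H. \<phi> (x + y) = \<phi> x + \<phi> y))"

definition C_obj :: "real set \<Rightarrow> bool" where
  "C_obj \<Omega> \<longleftrightarrow> \<Omega> = {} \<or> (\<exists>a b. 0 \<le> a \<and> a < b \<and> \<Omega> = {a<..<b})
                  \<or> (\<exists>b. 0 < b \<and> \<Omega> = {0..<b})"

definition C_hom :: "real set \<Rightarrow> real set \<Rightarrow> nat set" where
  "C_hom \<Omega> \<Omega>' = (if \<Omega> = {} then {1}
                   else {n. 0 < n \<and> (\<lambda>x. real n * x) ` \<Omega> \<subseteq> \<Omega>'})"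

text \<open>Composition u o w of w : B -> C and u : C -> D (multiplication; into the
  singleton hom-set when B is empty).\<close>
definition C_comp :: "real set \<Rightarrow> nat \<Rightarrow> nat \<Rightarrow> nat" where
  "C_comp B u w = (if B = {} then 1 else u * w)"

text \<open>A functor is given by its object part Fo and morphism part Fm, where
  Fm n V W : Fo V -> Fo W is the action of the morphism n : V -> W.\<close>
definition C_functor :: "(real set \<Rightarrow> 'a set) \<Rightarrow> (nat \<Rightarrow> real set \<Rightarrow> real set \<Rightarrow> 'a \<Rightarrow> 'a) \<Rightarrow> bool" where
  "C_functor Fo Fm \<longleftrightarrow>
     (\<forall>V W n x. C_obj V \<longrightarrow> C_obj W \<longrightarrow> n \<in> C_hom V W \<longrightarrow> x \<in> Fo V \<longrightarrow> Fm n V W x \<in> Fo W) \<and>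
     (\<forall>V x. C_obj V \<longrightarrow> x \<in> Fo V \<longrightarrow> Fm 1 V V x = x) \<and>
     (\<forall>U V W n m x. C_obj U \<longrightarrow> C_obj V \<longrightarrow> C_obj W \<longrightarrow> n \<in> C_hom U V \<longrightarrow> m \<in> C_hom V W \<longrightarrow>
        x \<in> Fo U \<longrightarrow> Fm (C_comp U m n) U W x = Fm m V W (Fm n U V x))"

text \<open>Flat = filtering, conditions (1)-(3).\<close>
definition C_flat :: "(real set \<Rightarrow> 'a set) \<Rightarrow> (nat \<Rightarrow> real set \<Rightarrow> real set \<Rightarrow> 'a \<Rightarrow> 'a) \<Rightarrow> bool" where
  "C_flat Fo Fm \<longleftrightarrow>
     (\<exists>C. C_obj C \<and> Fo C \<noteq> {}) \<and>
     (\<forall>C1 C2 a1 a2. C_obj C1 \<longrightarrow> C_obj C2 \<longrightarrow> a1 \<in> Fo C1 \<longrightarrow> a2 \<in> Fo C2 \<longrightarrow>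
        (\<exists>C a u1 u2. C_obj C \<and> a \<in> Fo C \<and> u1 \<in> C_hom C C1 \<and> u2 \<in> C_hom C C2 \<and>
            Fm u1 C C1 a = a1 \<and> Fm u2 C C2 a = a2)) \<and>
     (\<forall>C D u v a. C_obj C \<longrightarrow> C_obj D \<longrightarrow> u \<in> C_hom C D \<longrightarrow> v \<in> C_hom C D \<longrightarrow> a \<in> Fo C \<longrightarrow>
        Fm u C D a = Fm v C D a \<longrightarrow>
        (\<exists>B b w. C_obj B \<and> b \<in> Fo B \<and> w \<in> C_hom B C \<and>
            C_comp B u w = C_comp B v w \<and> Fm w B C b = a))"

definition C_continuous :: "(real set \<Rightarrow> 'a set) \<Rightarrow> (nat \<Rightarrow> real set \<Rightarrow> real set \<Rightarrow> 'a \<Rightarrow> 'a) \<Rightarrow> bool" where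
  "C_continuous Fo Fm \<longleftrightarrow>
     (\<forall>U \<U>. C_obj U \<longrightarrow> (\<forall>V\<in>\<U>. C_obj V \<and> V \<subseteq> U) \<longrightarrow> \<Union>\<U> = U \<longrightarrow>
        (\<forall>x\<in>Fo U. \<exists>V\<in>\<U>. \<exists>y\<in>Fo V. Fm 1 V U y = x))"

text \<open>Natural isomorphism of set-valued functors on C (isomorphism of the
  corresponding points of the topos).\<close>
definition C_nat_iso ::
  "(real set \<Rightarrow> 'a set) \<Rightarrow> (nat \<Rightarrow> real set \<Rightarrow> real set \<Rightarrow> 'a \<Rightarrow> 'a) \<Rightarrow>
   (real set \<Rightarrow> 'b set) \<Rightarrow> (nat \<Rightarrow> real set \<Rightarrow> real set \<Rightarrow> 'b \<Rightarrow> 'b) \<Rightarrow> bool" where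
  "C_nat_iso Fo Fm Go Gm \<longleftrightarrow>
     (\<exists>\<eta>::real set \<Rightarrow> 'a \<Rightarrow> 'b.
        (\<forall>V. C_obj V \<longrightarrow> bij_betw (\<eta> V) (Fo V) (Go V)) \<and>
        (\<forall>V W n x. C_obj V \<longrightarrow> C_obj W \<longrightarrow> n \<in> C_hom V W \<longrightarrow> x \<in> Fo V \<longrightarrow>
            \<eta> W (Fm n V W x) = Gm n V W (\<eta> V x)))"

definition FH_obj :: "real set \<Rightarrow> real set \<Rightarrow> real set" where
  "FH_obj H V = V \<inter> H \<inter> {0<..}"

definition FH_mor :: "nat \<Rightarrow> real set \<Rightarrow> real set \<Rightarrow> real \<Rightarrow> real" where
  "FH_mor n V W x = real n * x"

end

theory Submission
  imports Defs
begin

text \<open>Positive elements of a rank one group are commensurable, so any two of them are integer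
  multiples of a common positive element \<open>t\<close>; a small interval around \<open>t\<close> then maps into
  both given intervals, which is the essential filtering condition. Condition (3) holds because
  \<open>n a\<close> determines \<open>n\<close> for \<open>a > 0\<close>, and continuity because inclusions act trivially.
  For injectivity, naturality of an isomorphism \<open>F\<^sub>H \<cong> F\<^sub>H\<^sub>'\<close> along inclusions of ever smaller
  intervals forces every component to be the identity, so \<open>H\<close> and \<open>H'\<close> have the same positive
  elements.\<close>

lemma add_subgroup_int_mult:
  assumes "add_subgroup H" "x \<in> H"
  shows "of_int k * x \<in> H"
proof (induction k rule: int_induct[where k = 0])
  case base show ?case using assms(1) by (simp add: add_subgroup_def)
next
  case (step1 i) then show ?case using assms by (simp add: add_subgroup_def distrib_right)
next
  case (step2 i)
  then have "of_int i * x + - x \<in> H" using assms unfolding add_subgroup_def by blast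
  then show ?case by (simp add: left_diff_distrib)
qed

lemma additive_on_subgroup_int_mult:
  fixes \<phi> :: "real \<Rightarrow> rat"
  assumes "add_subgroup H" "x \<in> H" and add: "\<forall>x\<in>H. \<forall>y\<in>H. \<phi> (x + y) = \<phi> x + \<phi> y"
  shows "\<phi> (of_int k * x) = of_int k * \<phi> x"
proof (induction k rule: int_induct[where k = 0])
  case base
  have "0 \<in> H" using assms(1) by (simp add: add_subgroup_def)
  then have "\<phi> (0 + 0) = \<phi> 0 + \<phi> 0" using add by blast
  then show ?case by simp
next
  case (step1 i)
  have "\<phi> (of_int i * x + x) = \<phi> (of_int i * x) + \<phi> x"
    using add add_subgroup_int_mult[OF assms(1,2)] assms(2) by blast
  then show ?case using step1 by (simp add: algebra_simps)
next
  case (step2 i)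
  have "\<phi> (of_int (i - 1) * x + x) = \<phi> (of_int (i - 1) * x) + \<phi> x"
    using add add_subgroup_int_mult[OF assms(1,2)] assms(2) by blast
  then show ?case using step2 by (simp add: algebra_simps)
qed

lemma rank_one_subgroup_ratio_rational:
  assumes "rank_one_subgroup H" "x \<in> H" "y \<in> H" "x \<noteq> 0"
  shows "\<exists>q. y = of_rat q * x"
proof -
  have S: "add_subgroup H" using assms(1) by (simp add: rank_one_subgroup_def)
  obtain Q and \<phi> :: "real \<Rightarrow> rat" where bij: "bij_betw \<phi> H Q"
    and add: "\<forall>x\<in>H. \<forall>y\<in>H. \<phi> (x + y) = \<phi> x + \<phi> y"
    using assms(1) unfolding rank_one_subgroup_def by blast
  have inj: "inj_on \<phi> H" using bij by (simp add: bij_betw_def)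
  have "\<phi> 0 = 0" using additive_on_subgroup_int_mult[OF S assms(2) add, of 0] by simp
  moreover have "0 \<in> H" using S by (simp add: add_subgroup_def)
  ultimately have "\<phi> x \<noteq> 0" using inj assms(2,4) by (metis inj_on_def)
  obtain p r where pr: "quotient_of (\<phi> y / \<phi> x) = (p, r)" by fastforce
  have "r > 0" using quotient_of_denom_pos[OF pr] .
  have "of_int r * \<phi> y = of_int p * \<phi> x"
    using quotient_of_div[OF pr] \<open>\<phi> x \<noteq> 0\<close> \<open>r > 0\<close> by (simp add: field_simps)
  then have "\<phi> (of_int r * y) = \<phi> (of_int p * x)"
    using additive_on_subgroup_int_mult[OF S _ add] assms(2,3) by simp
  then have "of_int r * y = of_int p * x"
    using inj add_subgroup_int_mult[OF S] assms(2,3) by (meson inj_on_def)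
  then have "y = of_rat (of_int p / of_int r) * x"
    using \<open>r > 0\<close> by (simp add: of_rat_divide field_simps)
  then show ?thesis ..
qed

text \<open>Bezout: if \<open>y/x = n/m\<close> in lowest terms, then \<open>x/m = u x + v y\<close> with \<open>u m + v n = 1\<close>.\<close>
lemma add_subgroup_common_submultiple:
  assumes S: "add_subgroup H" and "x \<in> H" "y \<in> H" "0 < x" "0 < y" "y = of_rat q * x"
  shows "\<exists>t\<in>H. 0 < t \<and> (\<exists>m n::nat. 0 < m \<and> 0 < n \<and> x = real m * t \<and> y = real n * t)"
proof -
  obtain n m where nm: "quotient_of q = (n, m)" by fastforce
  have "m > 0" using quotient_of_denom_pos[OF nm] .
  have q: "of_rat q = (of_int n / of_int m :: real)"
    using quotient_of_div[OF nm] by (simp add: of_rat_divide)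
  have "n > 0" using assms(4-6) \<open>m > 0\<close> q by (simp add: zero_less_mult_iff zero_less_divide_iff)
  obtain u v where uv: "u * m + v * n = 1"
    using bezout_int[of m n] quotient_of_coprime[OF nm] by (auto simp: coprime_commute)
  define t where "t = x / of_int m"
  have xt: "x = of_int m * t" and yt: "y = of_int n * t"
    using \<open>m > 0\<close> assms(6) q by (simp_all add: t_def)
  have "t = of_int (u * m + v * n) * t" using uv by simp
  also have "\<dots> = of_int u * x + of_int v * y" by (simp add: xt yt algebra_simps)
  finally have "t \<in> H"
    using add_subgroup_int_mult[OF S assms(2)] add_subgroup_int_mult[OF S assms(3)] S
    by (simp add: add_subgroup_def)
  moreover have "0 < t" using assms(4) \<open>m > 0\<close> by (simp add: t_def)
  moreover have "x = real (nat m) * t \<and> y = real (nat n) * t"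
    using xt yt \<open>m > 0\<close> \<open>n > 0\<close> by simp
  ultimately show ?thesis using \<open>m > 0\<close> \<open>n > 0\<close> by (metis zero_less_nat_eq)
qed

lemma C_obj_interval: "0 \<le> a \<Longrightarrow> a < b \<Longrightarrow> C_obj {a<..<b}"
  unfolding C_obj_def by blast

lemma C_hom_inclusion: "V \<subseteq> W \<Longrightarrow> 1 \<in> C_hom V W"
  unfolding C_hom_def by auto

lemma C_obj_nhd:
  assumes "C_obj W" "z \<in> W" "0 < z"
  shows "\<exists>d>0. d \<le> z \<and> {z - d<..<z + d} \<subseteq> W"
  using assms unfolding C_obj_def
proof (elim disjE exE conjE)
  fix a b assume "W = {a<..<b}" "0 \<le> a"
  then show ?thesis using assms by (intro exI[of _ "min (z - a) (b - z)"]) auto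
next
  fix b assume "W = {0..<b}"
  then show ?thesis using assms by (intro exI[of _ "min z (b - z)"]) auto
qed (use assms in simp)

lemma C_hom_scaled_interval:
  assumes "0 < m" "0 < e" "real m * e \<le> d" "{real m * t - d<..<real m * t + d} \<subseteq> W"
  shows "m \<in> C_hom {t - e<..<t + e} W"
proof -
  have close: "\<bar>real m * x - real m * t\<bar> < d" if "\<bar>x - t\<bar> < e" for x
  proof -
    have "\<bar>real m * x - real m * t\<bar> = real m * \<bar>x - t\<bar>"
      by (simp add: abs_mult flip: right_diff_distrib)
    also have "\<dots> < real m * e" using that \<open>0 < m\<close> by simp
    finally show ?thesis using assms(3) by linarith
  qed
  have "(\<lambda>x. real m * x) ` {t - e<..<t + e} \<subseteq> {real m * t - d<..<real m * t + d}"
  proof (rule image_subsetI)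
    fix x assume "x \<in> {t - e<..<t + e}"
    then have "\<bar>x - t\<bar> < e" by auto
    from close[OF this] show "real m * x \<in> {real m * t - d<..<real m * t + d}" by auto
  qed
  with assms(4) have "(\<lambda>x. real m * x) ` {t - e<..<t + e} \<subseteq> W" by blast
  then show ?thesis using assms(1,2) by (simp add: C_hom_def)
qed

lemma FH_functor:
  assumes "add_subgroup H"
  shows "C_functor (FH_obj H) FH_mor"
  unfolding C_functor_def
proof (intro conjI allI impI)
  fix V W n x assume "n \<in> C_hom V W" "x \<in> FH_obj H V"
  then show "FH_mor n V W x \<in> FH_obj H W"
    using add_subgroup_int_mult[OF assms, of x "int n"]
    by (auto simp: C_hom_def FH_obj_def FH_mor_def split: if_splits)
qed (auto simp: C_comp_def FH_obj_def FH_mor_def)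

lemma FH_continuous: "C_continuous (FH_obj H) FH_mor"
  unfolding C_continuous_def FH_obj_def FH_mor_def by auto

lemma FH_nonempty:
  assumes "add_subgroup H" "H \<noteq> {0}"
  shows "\<exists>C. C_obj C \<and> FH_obj H C \<noteq> {}"
proof -
  obtain h where "h \<in> H" "h \<noteq> 0" using assms by (auto simp: add_subgroup_def)
  then have "\<bar>h\<bar> \<in> FH_obj H {0<..<\<bar>h\<bar> + 1}"
    using assms(1) by (auto simp: FH_obj_def add_subgroup_def abs_if)
  moreover have "C_obj {0<..<\<bar>h\<bar> + 1}" by (rule C_obj_interval) auto
  ultimately show ?thesis by blast
qed

lemma FH_cofiltered:
  assumes R: "rank_one_subgroup H" and "C_obj C1" "C_obj C2"
    and a1: "a1 \<in> FH_obj H C1" and a2: "a2 \<in> FH_obj H C2"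
  shows "\<exists>C a u1 u2. C_obj C \<and> a \<in> FH_obj H C \<and> u1 \<in> C_hom C C1 \<and> u2 \<in> C_hom C C2 \<and>
           FH_mor u1 C C1 a = a1 \<and> FH_mor u2 C C2 a = a2"
proof -
  have S: "add_subgroup H" using R by (simp add: rank_one_subgroup_def)
  have a1': "a1 \<in> C1" "a1 \<in> H" "0 < a1" and a2': "a2 \<in> C2" "a2 \<in> H" "0 < a2"
    using a1 a2 by (auto simp: FH_obj_def)
  obtain q where "a2 = of_rat q * a1"
    using rank_one_subgroup_ratio_rational[OF R a1'(2) a2'(2)] a1'(3) by auto
  then obtain t m n where t: "t \<in> H" "0 < t" "0 < m" "0 < n" "a1 = real m * t" "a2 = real n * t"
    using add_subgroup_common_submultiple[OF S a1'(2) a2'(2) a1'(3) a2'(3)] by blast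
  obtain d1 where d1: "0 < d1" "d1 \<le> a1" "{a1 - d1<..<a1 + d1} \<subseteq> C1"
    using C_obj_nhd[OF \<open>C_obj C1\<close> a1'(1,3)] by blast
  obtain d2 where d2: "0 < d2" "{a2 - d2<..<a2 + d2} \<subseteq> C2"
    using C_obj_nhd[OF \<open>C_obj C2\<close> a2'(1,3)] by blast
  define e where "e = min (d1 / m) (d2 / n)"
  have "0 < e" "real m * e \<le> d1" "real n * e \<le> d2"
    using d1 d2 t by (simp_all add: e_def min_def field_simps)
  moreover have "real m * e \<le> real m * t" using \<open>real m * e \<le> d1\<close> d1(2) t(5) by linarith
  then have "e \<le> t" using t(3) by simp
  ultimately show ?thesis
    using C_hom_scaled_interval[of m e d1 t C1] C_hom_scaled_interval[of n e d2 t C2] d1 d2 t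
      C_obj_interval[of "t - e" "t + e"]
    by (intro exI[of _ "{t - e<..<t + e}"] exI[of _ t] exI[of _ m] exI[of _ n])
       (auto simp: FH_obj_def FH_mor_def)
qed

lemma FH_flat:
  assumes "rank_one_subgroup H" "H \<noteq> {0}"
  shows "C_flat (FH_obj H) FH_mor"
  unfolding C_flat_def
proof (intro conjI allI impI)
  show "\<exists>C. C_obj C \<and> FH_obj H C \<noteq> {}"
    using FH_nonempty assms by (simp add: rank_one_subgroup_def)
next
  fix C1 C2 a1 a2 assume "C_obj C1" "C_obj C2" "a1 \<in> FH_obj H C1" "a2 \<in> FH_obj H C2"
  then show "\<exists>C a u1 u2. C_obj C \<and> a \<in> FH_obj H C \<and> u1 \<in> C_hom C C1 \<and> u2 \<in> C_hom C C2 \<and>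
               FH_mor u1 C C1 a = a1 \<and> FH_mor u2 C C2 a = a2"
    using FH_cofiltered[OF assms(1)] by blast
next
  fix C D u v a assume "C_obj C" "a \<in> FH_obj H C" "FH_mor u C D a = FH_mor v C D a"
  moreover from this have "u = v" by (simp add: FH_obj_def FH_mor_def)
  ultimately show "\<exists>B b w. C_obj B \<and> b \<in> FH_obj H B \<and> w \<in> C_hom B C \<and>
                     C_comp B u w = C_comp B v w \<and> FH_mor w B C b = a"
    using C_hom_inclusion[of C C] by (intro exI[of _ C] exI[of _ a] exI[of _ 1]) (simp add: FH_mor_def)
qed

lemma FH_nat_iso_component_id:
  assumes bij: "\<forall>V. C_obj V \<longrightarrow> bij_betw (\<eta> V) (FH_obj H V) (FH_obj H' V)"
    and nat: "\<forall>V W n x. C_obj V \<longrightarrow> C_obj W \<longrightarrow> n \<in> C_hom V W \<longrightarrow> x \<in> FH_obj H V \<longrightarrow>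
                \<eta> W (FH_mor n V W x) = FH_mor n V W (\<eta> V x)"
    and "C_obj W" "x \<in> FH_obj H W"
  shows "\<eta> W x = x"
proof (rule ccontr)
  assume ne: "\<eta> W x \<noteq> x"
  have x: "x \<in> W" "0 < x" "x \<in> H" using assms(4) by (auto simp: FH_obj_def)
  obtain d where d: "0 < d" "d \<le> x" "{x - d<..<x + d} \<subseteq> W"
    using C_obj_nhd[OF \<open>C_obj W\<close> x(1,2)] by blast
  define e where "e = min d \<bar>\<eta> W x - x\<bar>"
  define V where "V = {x - e<..<x + e}"
  have "0 < e" "e \<le> d" using d ne by (simp_all add: e_def)
  then have "C_obj V" "V \<subseteq> W" "x \<in> FH_obj H V"
    using d x by (auto simp: V_def FH_obj_def intro!: C_obj_interval)
  have "\<eta> W (FH_mor 1 V W x) = FH_mor 1 V W (\<eta> V x)"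
    using nat \<open>C_obj V\<close> \<open>C_obj W\<close> C_hom_inclusion[OF \<open>V \<subseteq> W\<close>] \<open>x \<in> FH_obj H V\<close> by blast
  then have "\<eta> W x = \<eta> V x" by (simp add: FH_mor_def)
  also have "\<dots> \<in> FH_obj H' V" using bij \<open>C_obj V\<close> \<open>x \<in> FH_obj H V\<close> by (meson bij_betwE)
  finally show False by (auto simp: V_def FH_obj_def e_def)
qed

lemma FH_nat_iso_obj_eq:
  assumes "C_nat_iso (FH_obj H) FH_mor (FH_obj H') FH_mor" "C_obj W"
  shows "FH_obj H W = FH_obj H' W"
proof -
  obtain \<eta> where bij: "\<forall>V. C_obj V \<longrightarrow> bij_betw (\<eta> V) (FH_obj H V) (FH_obj H' V)"
    and nat: "\<forall>V W n x. C_obj V \<longrightarrow> C_obj W \<longrightarrow> n \<in> C_hom V W \<longrightarrow> x \<in> FH_obj H V \<longrightarrow>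
                \<eta> W (FH_mor n V W x) = FH_mor n V W (\<eta> V x)"
    using assms(1) unfolding C_nat_iso_def by blast
  have "FH_obj H' W = \<eta> W ` FH_obj H W" using bij assms(2) by (simp add: bij_betw_def)
  also have "\<dots> = FH_obj H W"
    using FH_nat_iso_component_id[OF bij nat assms(2)] by simp
  finally show ?thesis by simp
qed

lemma add_subgroup_subsetI_pos:
  fixes H H' :: "real set"
  assumes "add_subgroup H" "add_subgroup H'" "H \<inter> {0<..} \<subseteq> H'"
  shows "H \<subseteq> H'"
proof
  fix x assume "x \<in> H"
  consider "x = 0" | "0 < x" | "0 < - x" by linarith
  then show "x \<in> H'"
  proof cases
    case 1
    then show ?thesis using assms(2) by (simp add: add_subgroup_def)
  next
    case 2
    then show ?thesis using assms(3) \<open>x \<in> H\<close> by blast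
  next
    case 3
    have "- x \<in> H" using assms(1) \<open>x \<in> H\<close> by (simp add: add_subgroup_def)
    then have "- x \<in> H'" using assms(3) 3 by blast
    then show ?thesis using assms(2) add_subgroup_def by force
  qed
qed

lemma FH_nat_iso_imp_eq:
  fixes H H' :: "real set"
  assumes "add_subgroup H" "add_subgroup H'" "C_nat_iso (FH_obj H) FH_mor (FH_obj H') FH_mor"
  shows "H = H'"
proof -
  have "H \<inter> {0<..} = H' \<inter> {0<..}"
  proof (intro set_eqI iffI)
    fix z assume "z \<in> H \<inter> {0<..}"
    moreover have "C_obj {0<..<z + 1}" using calculation by (intro C_obj_interval) auto
    ultimately show "z \<in> H' \<inter> {0<..}"
      using FH_nat_iso_obj_eq[OF assms(3)] by (force simp: FH_obj_def)
  next
    fix z assume "z \<in> H' \<inter> {0<..}"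
    moreover have "C_obj {0<..<z + 1}" using calculation by (intro C_obj_interval) auto
    ultimately show "z \<in> H \<inter> {0<..}"
      using FH_nat_iso_obj_eq[OF assms(3)] by (force simp: FH_obj_def)
  qed
  then show ?thesis
    using add_subgroup_subsetI_pos[OF assms(1,2)] add_subgroup_subsetI_pos[OF assms(2,1)] by blast
qed

theorem proposition3p3:
  shows "(\<forall>H. rank_one_subgroup H \<and> H \<noteq> {0} \<longrightarrow>
            C_functor (FH_obj H) FH_mor \<and> C_flat (FH_obj H) FH_mor \<and> C_continuous (FH_obj H) FH_mor)
       \<and> (\<forall>H H'. rank_one_subgroup H \<and> H \<noteq> {0} \<and> rank_one_subgroup H' \<and> H' \<noteq> {0} \<and>
            C_nat_iso (FH_obj H) FH_mor (FH_obj H') FH_mor \<longrightarrow> H = H')"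
  using FH_functor FH_flat FH_continuous FH_nat_iso_imp_eq by (auto simp: rank_one_subgroup_def)

end
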